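(* Let $r\ge 2$, $t$ and $s$ be positive integers with $\binom{8r^2}{r} \le s \le \beta_r \binom{t}{r}$, where $\beta_r := (12r)^{-r/(r-1)}$. Then \[ P_2(\mathcal{C}(s,r)) \le \tfrac{1}{2}\, P_2(\mathcal{L}(s,r,t)). \]
   Context: For a hypergraph $H$, $P_2(H)=\sum_x d(x)^2$ with $d(x)$ the number of edges containing $x$. The colex order on $r$-subsets of $\mathbb{N}$ is $A<B$ iff $\sum_{i\in A}2^i<\sum_{i\in B}2^i$, and $\mathcal{C}(s,r)$ is the family of the first $s$ $r$-subsets of $\mathbb{N}$ in colex order. The lex order on $[t]^{(r)}$ (the $r$-subsets of $\{1,\dots,t\}$) is $A<B$ iff $\min(A\triangle B)\in A$, and $\mathcal{L}(s,r,t)$ is the $r$-graph on $[t]$ consisting of the first $s$ sets of $[t]^{(r)}$ in lex order. *)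

theory Defs
  imports Complex_Main
begin

definition hdeg :: "'a set set \<Rightarrow> 'a \<Rightarrow> nat" where
  "hdeg H x = card {e \<in> H. x \<in> e}"

definition P2 :: "'a set set \<Rightarrow> nat" where
  "P2 H = (\<Sum>x\<in>\<Union>H. (hdeg H x)^2)"

definition colex_code :: "nat set \<Rightarrow> nat" where
  "colex_code A = (\<Sum>i\<in>A. 2^i)"

definition colex_less :: "nat set \<Rightarrow> nat set \<Rightarrow> bool" where
  "colex_less A B \<longleftrightarrow> colex_code A < colex_code B"

definition rsets :: "nat \<Rightarrow> nat set set" where
  "rsets r = {A. finite A \<and> card A = r}"

text \<open>C(s,r): the first s r-subsets of nat in colex order.\<close>
definition colex_initial :: "nat \<Rightarrow> nat \<Rightarrow> nat set set" where
  "colex_initial s r = {A \<in> rsets r. card {B \<in> rsets r. colex_less B A} < s}"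

definition lex_less :: "nat set \<Rightarrow> nat set \<Rightarrow> bool" where
  "lex_less A B \<longleftrightarrow> A \<noteq> B \<and> Min ((A - B) \<union> (B - A)) \<in> A"

definition rsets_of :: "nat \<Rightarrow> nat \<Rightarrow> nat set set" where
  "rsets_of r t = {A. A \<subseteq> {1..t} \<and> card A = r}"

text \<open>L(s,r,t): the first s sets of [t]^(r) in lex order.\<close>
definition lex_initial :: "nat \<Rightarrow> nat \<Rightarrow> nat \<Rightarrow> nat set set" where
  "lex_initial s r t = {A \<in> rsets_of r t. card {B \<in> rsets_of r t. lex_less B A} < s}"

definition beta :: "nat \<Rightarrow> real" where
  "beta r = (12 * real r) powr (- (real r / (real r - 1)))"

end

theory Submission
  imports Defs "HOL-Library.Nat_Bijection" "HOL-Analysis.Convex"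
begin

text \<open>Let m be minimal with s \<le> C(m,r). The colex family lives on {..<m}, so its degrees are at
  most C(m-1,r-1), which gives (m - r) P2(C) \<le> r^2 s^2. The bound s \<le> \<beta>_r C(t,r) forces t to be
  large compared with m, so that for k about (m - r)/(2 r^2) there are at least s sets
  consisting of one element of {1..k} and r - 1 elements above k. All of them precede in lex
  order every set avoiding {1..k}, hence every set of the lex family meets {1..k}, and
  Cauchy--Schwarz applied to the degrees on {1..k} gives s^2 \<le> k P2(L). Together:
  2 r^2 k P2(C) \<le> r^2 s^2 \<le> r^2 k P2(L).\<close>

lemma inj_on_card_predecessors:
  assumes fin: "\<And>a. a \<in> U \<Longrightarrow> finite {b \<in> U. prec b a}"
    and irrefl: "\<And>a. a \<in> U \<Longrightarrow> \<not> prec a a"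
    and trans: "\<And>a b c. \<lbrakk>a \<in> U; b \<in> U; c \<in> U; prec a b; prec b c\<rbrakk> \<Longrightarrow> prec a c"
    and total: "\<And>a b. \<lbrakk>a \<in> U; b \<in> U; a \<noteq> b\<rbrakk> \<Longrightarrow> prec a b \<or> prec b a"
  shows "inj_on (\<lambda>a. card {b \<in> U. prec b a}) U"
proof (rule inj_onI)
  have less: "card {b \<in> U. prec b a} < card {b \<in> U. prec b c}"
    if "a \<in> U" "c \<in> U" "prec a c" for a c
  proof (rule psubset_card_mono)
    show "finite {b \<in> U. prec b c}" using fin that(2) .
    show "{b \<in> U. prec b a} \<subset> {b \<in> U. prec b c}" using that trans irrefl by blast
  qed
  fix a c assume ac: "a \<in> U" "c \<in> U" and eq: "card {b \<in> U. prec b a} = card {b \<in> U. prec b c}"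
  show "a = c"
  proof (rule ccontr)
    assume "a \<noteq> c"
    then have "prec a c \<or> prec c a" using total ac by blast
    then show False using less[OF ac] less[OF ac(2,1)] eq by linarith
  qed
qed

lemma card_initial_segment_le:
  assumes "\<And>a. a \<in> U \<Longrightarrow> finite {b \<in> U. prec b a}"
    and "\<And>a. a \<in> U \<Longrightarrow> \<not> prec a a"
    and "\<And>a b c. \<lbrakk>a \<in> U; b \<in> U; c \<in> U; prec a b; prec b c\<rbrakk> \<Longrightarrow> prec a c"
    and "\<And>a b. \<lbrakk>a \<in> U; b \<in> U; a \<noteq> b\<rbrakk> \<Longrightarrow> prec a b \<or> prec b a"
  shows "card {a \<in> U. card {b \<in> U. prec b a} < s} \<le> s"
proof -
  let ?rank = "\<lambda>a. card {b \<in> U. prec b a}"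
  have "inj_on ?rank {a \<in> U. ?rank a < s}"
    by (rule inj_on_subset[OF inj_on_card_predecessors[OF assms]]) auto
  then have "card {a \<in> U. ?rank a < s} = card (?rank ` {a \<in> U. ?rank a < s})"
    by (rule card_image[symmetric])
  also have "\<dots> \<le> card {..<s}" by (intro card_mono) auto
  finally show ?thesis by simp
qed

lemma card_initial_segment:
  assumes fin: "finite U"
    and irrefl: "\<And>a. a \<in> U \<Longrightarrow> \<not> prec a a"
    and trans: "\<And>a b c. \<lbrakk>a \<in> U; b \<in> U; c \<in> U; prec a b; prec b c\<rbrakk> \<Longrightarrow> prec a c"
    and total: "\<And>a b. \<lbrakk>a \<in> U; b \<in> U; a \<noteq> b\<rbrakk> \<Longrightarrow> prec a b \<or> prec b a"
  shows "card {a \<in> U. card {b \<in> U. prec b a} < s} = min s (card U)"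
proof -
  define rank where "rank a = card {b \<in> U. prec b a}" for a
  have inj: "inj_on rank U"
    unfolding rank_def by (rule inj_on_card_predecessors[OF _ irrefl trans total]) (use fin in auto)
  have "rank a < card U" if "a \<in> U" for a
    unfolding rank_def using that fin irrefl by (intro psubset_card_mono) auto
  then have "rank ` U \<subseteq> {..<card U}" by blast
  moreover have "card (rank ` U) = card {..<card U}" by (simp add: card_image[OF inj])
  ultimately have onto: "rank ` U = {..<card U}" by (intro card_subset_eq) simp_all
  have "card {a \<in> U. rank a < s} = card (rank ` {a \<in> U. rank a < s})"
    by (rule card_image[symmetric]) (rule inj_on_subset[OF inj], blast)
  also have "rank ` {a \<in> U. rank a < s} = rank ` U \<inter> {..<s}" by blast
  also have "\<dots> = {..<min s (card U)}" using onto by auto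
  finally show ?thesis by (simp add: rank_def)
qed

lemma sum_card_incidences:
  assumes "finite H" "\<And>e. e \<in> H \<Longrightarrow> finite e" "finite V"
  shows "(\<Sum>x\<in>V. card {e \<in> H. x \<in> e}) = (\<Sum>e\<in>H. card (e \<inter> V))"
proof -
  have "(\<Sum>x\<in>V. card {e \<in> H. x \<in> e}) = (\<Sum>x\<in>V. \<Sum>e\<in>H. if x \<in> e then 1 else 0)"
    using assms by (auto simp: sum.If_cases intro!: sum.cong arg_cong[where f = card])
  also have "\<dots> = (\<Sum>e\<in>H. \<Sum>x\<in>V. if x \<in> e then 1 else 0)" by (rule sum.swap)
  also have "\<dots> = (\<Sum>e\<in>H. card (e \<inter> V))"
    using assms by (simp add: sum.If_cases Int_commute)
  finally show ?thesis .
qed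

lemma card_subsets_containing:
  assumes "finite V" "x \<in> V" "1 \<le> r"
  shows "card {e. e \<subseteq> V \<and> card e = r \<and> x \<in> e} = (card V - 1) choose (r - 1)"
proof -
  have "{e. e \<subseteq> V \<and> card e = r \<and> x \<in> e} = insert x ` {B. B \<subseteq> V - {x} \<and> card B = r - 1}"
  proof (intro equalityI subsetI)
    fix e assume e: "e \<in> {e. e \<subseteq> V \<and> card e = r \<and> x \<in> e}"
    then have "finite e" using assms(1) finite_subset by blast
    with e have "e = insert x (e - {x})" "e - {x} \<in> {B. B \<subseteq> V - {x} \<and> card B = r - 1}" by auto
    then show "e \<in> insert x ` {B. B \<subseteq> V - {x} \<and> card B = r - 1}" by blast
  next
    fix e assume "e \<in> insert x ` {B. B \<subseteq> V - {x} \<and> card B = r - 1}"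
    then obtain B where B: "e = insert x B" "B \<subseteq> V - {x}" "card B = r - 1" by auto
    then have "finite B" "x \<notin> B" using assms(1) finite_subset by auto
    with B assms show "e \<in> {e. e \<subseteq> V \<and> card e = r \<and> x \<in> e}" by auto
  qed
  moreover have "inj_on (insert x) {B. B \<subseteq> V - {x} \<and> card B = r - 1}"
    by (rule inj_onI) (metis Diff_insert_absorb DiffE insertI1 mem_Collect_eq subsetD)
  ultimately show ?thesis using n_subsets[of "V - {x}" "r - 1"] assms by (simp add: card_image)
qed

lemma hdeg_le_binomial:
  assumes "H \<subseteq> {e. e \<subseteq> V \<and> card e = r}" "finite V" "1 \<le> r"
  shows "hdeg H x \<le> (card V - 1) choose (r - 1)"
proof (cases "x \<in> V")
  case True
  have "{e \<in> H. x \<in> e} \<subseteq> {e. e \<subseteq> V \<and> card e = r \<and> x \<in> e}" using assms(1) by auto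
  then have "card {e \<in> H. x \<in> e} \<le> card {e. e \<subseteq> V \<and> card e = r \<and> x \<in> e}"
    using assms(2) by (intro card_mono) (auto intro: finite_subset[of _ "Pow V"])
  then show ?thesis using card_subsets_containing[OF assms(2) True assms(3)] by (simp add: hdeg_def)
next
  case False
  then have "{e \<in> H. x \<in> e} = {}" using assms(1) by auto
  then have "hdeg H x = 0" unfolding hdeg_def by (simp only: card.empty)
  then show ?thesis by simp
qed

lemma P2_le_max_degree:
  assumes "finite H" "\<And>e. e \<in> H \<Longrightarrow> finite e \<and> card e = r"
    and "\<And>x. x \<in> \<Union>H \<Longrightarrow> hdeg H x \<le> D"
  shows "P2 H \<le> D * (r * card H)"
proof -
  have "P2 H \<le> (\<Sum>x\<in>\<Union>H. D * hdeg H x)"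
    unfolding P2_def power2_eq_square by (intro sum_mono mult_right_mono) (use assms in auto)
  also have "\<dots> = D * (\<Sum>x\<in>\<Union>H. card {e \<in> H. x \<in> e})"
    by (simp add: sum_distrib_left hdeg_def)
  also have "(\<Sum>x\<in>\<Union>H. card {e \<in> H. x \<in> e}) = (\<Sum>e\<in>H. card (e \<inter> \<Union>H))"
    using assms by (intro sum_card_incidences) auto
  also have "\<dots> = (\<Sum>e\<in>H. r)" using assms by (intro sum.cong) (auto simp: Int_absorb2 Union_upper)
  finally show ?thesis by (simp add: mult.commute)
qed

lemma card_squared_le_P2:
  assumes "finite H" "\<And>e. e \<in> H \<Longrightarrow> finite e" "\<And>e. e \<in> H \<Longrightarrow> e \<inter> K \<noteq> {}" "finite K"
  shows "(card H)^2 \<le> card K * P2 H"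
proof -
  have "card H = (\<Sum>e\<in>H. 1)" by simp
  also have "\<dots> \<le> (\<Sum>e\<in>H. card (e \<inter> K))"
    using assms by (intro sum_mono) (simp add: Suc_leI card_gt_0_iff)
  also have "\<dots> = (\<Sum>x\<in>K. hdeg H x)"
    unfolding hdeg_def using assms by (intro sum_card_incidences[symmetric])
  finally have "real (card H) ^ 2 \<le> (\<Sum>x\<in>K. 1 * real (hdeg H x)) ^ 2"
    by (intro power_mono) (simp_all flip: of_nat_sum)
  also have "\<dots> \<le> (\<Sum>x\<in>K. 1\<^sup>2) * (\<Sum>x\<in>K. real (hdeg H x) ^ 2)"
    by (rule Cauchy_Schwarz_ineq_sum)
  also have "(\<Sum>x\<in>K. real (hdeg H x) ^ 2) = (\<Sum>x\<in>K \<inter> \<Union>H. real (hdeg H x) ^ 2)"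
    using assms(4) by (intro sum.mono_neutral_right) (auto simp: hdeg_def card_gt_0_iff)
  also have "\<dots> \<le> (\<Sum>x\<in>\<Union>H. real (hdeg H x) ^ 2)"
    using assms(1,2) by (intro sum_mono2) auto
  finally have "real ((card H)^2) \<le> real (card K * P2 H)"
    by (simp add: P2_def mult_left_mono)
  then show ?thesis by linarith
qed

lemma colex_code_less_power:
  assumes "A \<subseteq> {..<m}"
  shows "colex_code A < 2 ^ m"
proof -
  have "colex_code A \<le> (\<Sum>i<m. 2 ^ i)"
    unfolding colex_code_def by (rule sum_mono2) (use assms in auto)
  also have "\<dots> < 2 ^ m" using sum_power2[of m] by (simp add: atLeast0LessThan)
  finally show ?thesis .
qed

lemma power_le_colex_code: "finite A \<Longrightarrow> i \<in> A \<Longrightarrow> 2 ^ i \<le> colex_code A"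
  unfolding colex_code_def by (rule member_le_sum) auto

lemma finite_colex_predecessors: "finite {B \<in> rsets r. colex_less B A}"
proof (rule finite_subset)
  show "{B \<in> rsets r. colex_less B A} \<subseteq> Pow {..<colex_code A}"
  proof
    fix B assume B: "B \<in> {B \<in> rsets r. colex_less B A}"
    have "B \<subseteq> {..<colex_code A}"
    proof
      fix i assume "i \<in> B"
      have "i < 2 ^ i" by (rule less_exp)
      also have "\<dots> \<le> colex_code B" using B \<open>i \<in> B\<close> power_le_colex_code by (auto simp: rsets_def)
      also have "\<dots> < colex_code A" using B by (simp add: colex_less_def)
      finally show "i \<in> {..<colex_code A}" by simp
    qed
    then show "B \<in> Pow {..<colex_code A}" by simp
  qed
qed simp

lemma colex_initial_subset_lessThan:
  assumes "s \<le> m choose r" "A \<in> colex_initial s r"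
  shows "A \<subseteq> {..<m}"
proof (rule ccontr)
  assume "\<not> A \<subseteq> {..<m}"
  then obtain i where i: "i \<in> A" "m \<le> i" by (meson lessThan_iff not_le subsetI)
  have A: "finite A" "card {B \<in> rsets r. colex_less B A} < s"
    using assms(2) by (auto simp: colex_initial_def rsets_def)
  have "{B. B \<subseteq> {..<m} \<and> card B = r} \<subseteq> {B \<in> rsets r. colex_less B A}"
  proof
    fix B assume B: "B \<in> {B. B \<subseteq> {..<m} \<and> card B = r}"
    have "colex_code B < 2 ^ m" using B colex_code_less_power by blast
    also have "\<dots> \<le> 2 ^ i" using i by simp
    also have "\<dots> \<le> colex_code A" using power_le_colex_code[OF A(1) i(1)] .
    finally show "B \<in> {B \<in> rsets r. colex_less B A}"
      using B by (auto simp: rsets_def colex_less_def intro: finite_subset)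
  qed
  then have "card {B. B \<subseteq> {..<m} \<and> card B = r} \<le> card {B \<in> rsets r. colex_less B A}"
    by (intro card_mono finite_colex_predecessors)
  then show False using A(2) assms(1) n_subsets[of "{..<m}" r] by simp
qed

lemma card_colex_initial_le: "card (colex_initial s r) \<le> s"
  unfolding colex_initial_def
proof (rule card_initial_segment_le)
  fix A B assume "A \<in> rsets r" "B \<in> rsets r" "A \<noteq> B"
  then have "set_encode A \<noteq> set_encode B" by (simp add: rsets_def set_encode_eq)
  then show "colex_less A B \<or> colex_less B A"
    by (auto simp: colex_less_def colex_code_def set_encode_def)
qed (use finite_colex_predecessors in \<open>auto simp: colex_less_def\<close>)

lemma lex_less_iff:
  assumes "finite A" "finite B"
  shows "lex_less A B \<longleftrightarrow> (\<exists>j\<in>A. j \<notin> B \<and> (\<forall>i<j. i \<in> A \<longleftrightarrow> i \<in> B))"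
proof -
  define D where "D = (A - B) \<union> (B - A)"
  have D: "finite D" using assms by (simp add: D_def)
  show ?thesis
  proof
    assume "lex_less A B"
    then have "D \<noteq> {}" "Min D \<in> A" by (auto simp: lex_less_def D_def)
    moreover have "i \<notin> D" if "i < Min D" for i using D that Min_le not_le by blast
    ultimately show "\<exists>j\<in>A. j \<notin> B \<and> (\<forall>i<j. i \<in> A \<longleftrightarrow> i \<in> B)"
      using Min_in[OF D] by (intro bexI[of _ "Min D"]) (auto simp: D_def)
  next
    assume "\<exists>j\<in>A. j \<notin> B \<and> (\<forall>i<j. i \<in> A \<longleftrightarrow> i \<in> B)"
    then obtain j where j: "j \<in> A" "j \<notin> B" "\<forall>i<j. i \<in> A \<longleftrightarrow> i \<in> B" by blast
    have "Min D = j"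
      using j by (intro Min_eqI[OF D]) (auto simp: D_def not_less[symmetric])
    then show "lex_less A B" using j by (auto simp: lex_less_def D_def)
  qed
qed

lemma lex_less_trans:
  assumes "finite A" "finite B" "finite C" "lex_less A B" "lex_less B C"
  shows "lex_less A C"
proof -
  obtain j1 where a: "j1 \<in> A" "j1 \<notin> B" "\<forall>i<j1. i \<in> A \<longleftrightarrow> i \<in> B"
    using assms lex_less_iff by blast
  obtain j2 where b: "j2 \<in> B" "j2 \<notin> C" "\<forall>i<j2. i \<in> B \<longleftrightarrow> i \<in> C"
    using assms lex_less_iff by blast
  have "\<exists>j\<in>A. j \<notin> C \<and> (\<forall>i<j. i \<in> A \<longleftrightarrow> i \<in> C)"
  proof (cases j1 j2 rule: linorder_cases)
    case less
    then show ?thesis using a b by (intro bexI[of _ j1]) auto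
  next
    case equal
    then show ?thesis using a b by blast
  next
    case greater
    then show ?thesis using a b by (intro bexI[of _ j2]) auto
  qed
  then show ?thesis using assms lex_less_iff by blast
qed

lemma finite_rsets_of: "finite (rsets_of r t)"
  by (rule finite_subset[of _ "Pow {1..t}"]) (auto simp: rsets_of_def)

lemma card_lex_initial:
  assumes "s \<le> t choose r"
  shows "card (lex_initial s r t) = s"
proof -
  have fin: "finite A" if "A \<in> rsets_of r t" for A
    using that by (auto simp: rsets_of_def intro: finite_subset)
  have "card (lex_initial s r t) = min s (card (rsets_of r t))"
    unfolding lex_initial_def
  proof (rule card_initial_segment[OF finite_rsets_of])
    fix A B C assume "A \<in> rsets_of r t" "B \<in> rsets_of r t" "C \<in> rsets_of r t"
      "lex_less A B" "lex_less B C"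
    then show "lex_less A C" using fin lex_less_trans by blast
  next
    fix A B assume "A \<in> rsets_of r t" "B \<in> rsets_of r t" "A \<noteq> B"
    then have "(A - B) \<union> (B - A) \<noteq> {}" "finite ((A - B) \<union> (B - A))" using fin by auto
    then have "Min ((A - B) \<union> (B - A)) \<in> (A - B) \<union> (B - A)" by (rule Min_in[rotated])
    then show "lex_less A B \<or> lex_less B A"
      using \<open>A \<noteq> B\<close> by (auto simp: lex_less_def Un_commute)
  qed (auto simp: lex_less_def)
  then show ?thesis using assms n_subsets[of "{1..t}" r] by (simp add: rsets_of_def)
qed

lemma card_insert_prefix_suffix_sets:
  "card ((\<lambda>(i, C). insert i C) ` ({1..k} \<times> {C. C \<subseteq> {k<..t} \<and> card C = r}))
    = k * ((t - k) choose r)"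
proof -
  let ?CC = "{C. C \<subseteq> {k<..t} \<and> card C = r}"
  have "inj_on (\<lambda>(i, C). insert i C) ({1..k} \<times> ?CC)"
  proof (rule inj_onI)
    fix p q assume p: "p \<in> {1..k} \<times> ?CC" and q: "q \<in> {1..k} \<times> ?CC"
      and eq: "(\<lambda>(i, C). insert i C) p = (\<lambda>(i, C). insert i C) q"
    obtain i C j D where pq: "p = (i, C)" "q = (j, D)" by fastforce
    have "i \<notin> C" "i \<notin> D" "j \<notin> C" "j \<notin> D" using p q pq by auto
    then show "p = q" using eq pq by (metis insert_ident insert_iff old.prod.case)
  qed
  then show ?thesis by (simp add: card_image card_cartesian_product n_subsets)
qed

lemma lex_initial_meets_prefix:
  assumes "1 \<le> r" "k \<le> t" "s \<le> k * ((t - k) choose (r - 1))" "A \<in> lex_initial s r t"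
  shows "A \<inter> {1..k} \<noteq> {}"
proof
  assume disj: "A \<inter> {1..k} = {}"
  have A: "A \<subseteq> {1..t}" "finite A" "card {B \<in> rsets_of r t. lex_less B A} < s"
    using assms(4) by (auto simp: lex_initial_def rsets_of_def intro: finite_subset)
  have A_above: "k < j" if "j \<in> A" for j using that A(1) disj by fastforce
  define CC where "CC = {C. C \<subseteq> {k<..t} \<and> card C = r - 1}"
  let ?T = "(\<lambda>(i, C). insert i C) ` ({1..k} \<times> CC)"
  have "card ?T = k * ((t - k) choose (r - 1))"
    unfolding CC_def by (rule card_insert_prefix_suffix_sets)
  moreover have "?T \<subseteq> {B \<in> rsets_of r t. lex_less B A}"
  proof
    fix B assume "B \<in> ?T"
    then obtain i C where i: "i \<in> {1..k}" and C: "C \<in> CC" and B: "B = insert i C" by auto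
    then have "finite C" "i \<notin> C" by (auto simp: CC_def intro: finite_subset)
    then have "insert i C \<in> rsets_of r t" using i C assms(1,2) by (auto simp: rsets_of_def CC_def)
    moreover have "lex_less (insert i C) A"
    proof -
      have "\<forall>j<i. j \<in> insert i C \<longleftrightarrow> j \<in> A" using i C by (auto simp: CC_def dest: A_above)
      moreover have "i \<notin> A" using i A_above by force
      ultimately show ?thesis using \<open>finite C\<close> A(2) by (subst lex_less_iff) auto
    qed
    ultimately show "B \<in> {B \<in> rsets_of r t. lex_less B A}" using B by simp
  qed
  then have "card ?T \<le> card {B \<in> rsets_of r t. lex_less B A}"
    by (intro card_mono) (auto intro: finite_subset[OF _ finite_rsets_of])
  ultimately show False using A(3) assms(3) by simp
qed

lemma diff_times_binomial: "(n - k) * (n choose k) = Suc k * (n choose Suc k)"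
  by (simp only: binomial_absorb_comp binomial_absorption)

lemma P2_colex_initial_le:
  assumes "1 \<le> r" "s \<le> m choose r" "(m - 1) choose r < s"
  shows "(m - r) * P2 (colex_initial s r) \<le> r^2 * s^2"
proof -
  let ?C = "colex_initial s r"
  have sub: "?C \<subseteq> {e. e \<subseteq> {..<m} \<and> card e = r}"
    using colex_initial_subset_lessThan[OF assms(2)] by (auto simp: colex_initial_def rsets_def)
  have "P2 ?C \<le> ((m - 1) choose (r - 1)) * (r * card ?C)"
  proof (rule P2_le_max_degree)
    show "finite ?C" using sub by (rule finite_subset) (auto intro: finite_subset[of _ "Pow {..<m}"])
    show "hdeg ?C x \<le> (m - 1) choose (r - 1)" for x
      using hdeg_le_binomial[OF sub _ assms(1)] by simp
  qed (use sub in \<open>auto intro: finite_subset\<close>)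
  also have "\<dots> \<le> ((m - 1) choose (r - 1)) * (r * s)"
    using card_colex_initial_le[of s r] by simp
  finally have "(m - r) * P2 ?C \<le> (m - r) * ((m - 1) choose (r - 1)) * (r * s)"
    by (simp add: mult.assoc)
  also have "(m - r) * ((m - 1) choose (r - 1)) = r * ((m - 1) choose r)"
    using diff_times_binomial[of "m - 1" "r - 1"] assms(1) by (simp add: Suc_diff_le)
  also have "r * ((m - 1) choose r) * (r * s) \<le> r * s * (r * s)"
    using assms(3) by simp
  finally show ?thesis by (simp add: power2_eq_square mult_ac)
qed

lemma P2_lex_initial_ge:
  assumes "1 \<le> r" "k \<le> t" "s \<le> t choose r" "s \<le> k * ((t - k) choose (r - 1))"
  shows "s^2 \<le> k * P2 (lex_initial s r t)"
proof -
  let ?L = "lex_initial s r t"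
  have "?L \<subseteq> rsets_of r t" by (auto simp: lex_initial_def)
  then have "finite ?L" "\<And>e. e \<in> ?L \<Longrightarrow> finite e"
    using finite_rsets_of by (auto simp: rsets_of_def intro: finite_subset)
  then have "(card ?L)^2 \<le> card {1..k} * P2 ?L"
    using lex_initial_meets_prefix[OF assms(1,2,4)] by (intro card_squared_le_P2) auto
  then show ?thesis using card_lex_initial[OF assms(3)] by simp
qed

lemma real_binomial_eq_prod: "real (n choose k) = (\<Prod>i<k. real n - real i) / fact k"
  by (simp add: binomial_gbinomial gbinomial_prod_rev atLeast0LessThan)

lemma binomial_mult_power_le:
  assumes "a \<le> b"
  shows "real (a choose k) * real b ^ k \<le> real (b choose k) * real a ^ k"
proof (cases "k \<le> a")
  case False
  then show ?thesis by (simp add: binomial_eq_0)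
next
  case True
  have "(\<Prod>i<k. (real a - real i) * real b) \<le> (\<Prod>i<k. (real b - real i) * real a)"
  proof (rule prod_mono)
    fix i assume "i \<in> {..<k}"
    then have "real i \<le> real a" using True by simp
    moreover have "real i * real a \<le> real i * real b" using assms by (intro mult_left_mono) auto
    moreover have "real i * real b \<le> real a * real b" using \<open>real i \<le> real a\<close> by (intro mult_right_mono) auto
    ultimately show "0 \<le> (real a - real i) * real b \<and> (real a - real i) * real b \<le> (real b - real i) * real a"
      by (simp add: algebra_simps)
  qed
  then show ?thesis
    by (simp add: real_binomial_eq_prod prod.distrib divide_right_mono mult.commute times_divide_eq_right)
qed

lemma binomial_mult_shifted_power_le:
  assumes "k \<le> a" "a \<le> b"
  shows "real (b choose k) * (real a - real k) ^ k \<le> real (a choose k) * real b ^ k"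
proof -
  have "(\<Prod>i<k. (real b - real i) * (real a - real k)) \<le> (\<Prod>i<k. (real a - real i) * real b)"
  proof (rule prod_mono)
    fix i assume "i \<in> {..<k}"
    then have h: "real i \<le> real k" "real k \<le> real a" "real a \<le> real b" using assms by auto
    then have "0 \<le> (real k - real i) * real b + real i * (real a - real k)" by simp
    then have "(real b - real i) * (real a - real k) \<le> (real a - real i) * real b"
      by (simp add: algebra_simps)
    then show "0 \<le> (real b - real i) * (real a - real k) \<and> (real b - real i) * (real a - real k) \<le> (real a - real i) * real b"
      using h by simp
  qed
  then show ?thesis
    by (simp add: real_binomial_eq_prod prod.distrib divide_right_mono mult.commute times_divide_eq_right)
qed

lemma beta_power:
  assumes "2 \<le> r"
  shows "beta r ^ (r - 1) = (1 / (12 * real r)) ^ r"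
proof -
  have pos: "0 < 12 * real r" using assms by simp
  have "beta r ^ (r - 1) = (12 * real r) powr (- (real r / (real r - 1)) * real (r - 1))"
    using pos by (simp add: beta_def powr_realpow[symmetric] powr_powr)
  also have "- (real r / (real r - 1)) * real (r - 1) = - real r" using assms by (simp add: of_nat_diff)
  finally show ?thesis using pos by (simp add: powr_minus_divide powr_realpow power_one_over)
qed

lemma beta_le_one: "2 \<le> r \<Longrightarrow> beta r \<le> 1"
  unfolding beta_def using powr_mono[of "- (real r / (real r - 1))" 0 "12 * real r"] by simp

lemma one_plus_inverse_power_le_three:
  assumes "1 \<le> r"
  shows "(1 + 1 / real r) ^ (r - 1) \<le> 3"
proof -
  have "(1 + 1 / real r) ^ (r - 1) \<le> exp (1 / real r) ^ (r - 1)"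
    by (intro power_mono exp_ge_add_one_self) (simp add: add_nonneg_nonneg)
  also have "\<dots> = exp (real (r - 1) / real r)" by (simp flip: exp_of_nat_mult)
  also have "\<dots> \<le> exp 1" using assms by simp
  also have "\<dots> \<le> 3" by (rule exp_le)
  finally show ?thesis .
qed

lemma shifted_ratio_power_lt:
  assumes r: "2 \<le> r" and "r \<le> M" "M \<le> t" "M choose r < s"
    and s: "real s \<le> beta r * real (t choose r)"
  shows "((real M - real r) / real t) ^ (r - 1) < 1 / (12 * real r)"
proof -
  define x where "x = (real M - real r) / real t"
  have t: "0 < t" and x: "0 \<le> x" using assms by (auto simp: x_def)
  have "real (t choose r) * (real M - real r) ^ r \<le> real (M choose r) * real t ^ r"
    using assms by (intro binomial_mult_shifted_power_le) auto
  also have "\<dots> < real s * real t ^ r" using assms t by (intro mult_strict_right_mono) auto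
  also have "\<dots> \<le> real (t choose r) * (beta r * real t ^ r)"
    using mult_right_mono[OF s, of "real t ^ r"] by (simp add: mult_ac)
  finally have "(real M - real r) ^ r < beta r * real t ^ r" by (rule mult_left_less_imp_less) simp
  then have "x ^ r < beta r" using t by (simp add: x_def power_divide divide_less_eq)
  have "(x ^ (r - 1)) ^ r = (x ^ r) ^ (r - 1)" by (simp flip: power_mult add: mult.commute)
  also have "\<dots> < beta r ^ (r - 1)" using \<open>x ^ r < beta r\<close> x r by (intro power_strict_mono) auto
  also have "\<dots> = (1 / (12 * real r)) ^ r" by (rule beta_power[OF r])
  finally show ?thesis unfolding x_def by (rule power_less_imp_less_base) simp
qed

lemma window_ratio_power_lt:
  fixes r M t k :: nat
  assumes r: "2 \<le> r" and M: "4 * r^2 + r \<le> M" and k: "0 < k" "(2 * r + 1) * k \<le> t"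
    and x: "((real M - real r) / real t) ^ (r - 1) < 1 / (12 * real r)"
  shows "(real M / real (t - k)) ^ (r - 1) < 1 / (4 * real r)"
proof -
  define R where "R = real r"
  have R: "2 \<le> R" using r by (simp add: R_def)
  have "real (4 * r^2 + r) \<le> real M" "real ((2 * r + 1) * k) \<le> real t"
    using M k(2) by (simp_all only: of_nat_le_iff)
  then have M': "4 * R^2 + R \<le> real M" and k': "(2 * R + 1) * real k \<le> real t"
    by (simp_all add: R_def algebra_simps)
  have "0 < 4 * R^2" "0 < 2 * R * real k" "0 < real k" using R k(1) by simp_all
  then have pos: "0 < real M - R" "0 < real t - real k"
    using M' k' by (linarith, simp add: algebra_simps)
  have tk: "real (t - k) = real t - real k" using pos(2) by simp
  have c1: "real M / (real M - R) \<le> 1 + 1 / (4 * R)"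
    using M' pos R by (simp add: field_simps power2_eq_square)
  have c2: "real t / (real t - real k) \<le> 1 + 1 / (2 * R)"
    using k' pos R by (simp add: field_simps)
  have cancel: "c / a * (d / b) * (a / d) = c / b" if "a \<noteq> 0" "d \<noteq> 0" for a b c d :: real
    using that by simp
  have "real M / real (t - k) = real M / (real M - R) * (real t / (real t - real k)) * ((real M - R) / real t)"
    unfolding tk by (rule cancel[symmetric]) (use pos in auto)
  also have "\<dots> \<le> (1 + 1 / R) * ((real M - R) / real t)"
  proof (rule mult_right_mono)
    have "real M / (real M - R) * (real t / (real t - real k)) \<le> (1 + 1 / (4 * R)) * (1 + 1 / (2 * R))"
      using c1 c2 pos R by (intro mult_mono) auto
    also have "\<dots> \<le> 1 + 1 / R" using R by (simp add: field_simps power2_eq_square)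
    finally show "real M / (real M - R) * (real t / (real t - real k)) \<le> 1 + 1 / R" .
  qed (use pos in simp)
  finally have y: "real M / real (t - k) \<le> (1 + 1 / R) * ((real M - R) / real t)" .
  have "(real M / real (t - k)) ^ (r - 1) \<le> (1 + 1 / R) ^ (r - 1) * ((real M - R) / real t) ^ (r - 1)"
    unfolding power_mult_distrib[symmetric] by (rule power_mono[OF y]) simp
  also have "\<dots> \<le> 3 * ((real M - R) / real t) ^ (r - 1)"
    using one_plus_inverse_power_le_three[of r] r pos by (intro mult_right_mono) (auto simp: R_def)
  also have "\<dots> < 3 * (1 / (12 * R))" using x by (simp add: R_def)
  finally show ?thesis by (simp add: R_def)
qed

lemma le_mult_binomial_of_ratio_bound:
  fixes r s m k t :: nat
  assumes r: "1 \<le> r" and s: "s \<le> m choose r" and m: "m \<le> 4 * r^2 * k" "m - 1 < t - k"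
    and y: "(real (m - 1) / real (t - k)) ^ (r - 1) < 1 / (4 * real r)"
  shows "s \<le> k * ((t - k) choose (r - 1))"
proof -
  have tk: "0 < real (t - k)" using m(2) by simp
  have "real ((m - 1) choose (r - 1)) * real (t - k) ^ (r - 1) \<le> real ((t - k) choose (r - 1)) * real (m - 1) ^ (r - 1)"
    using m(2) by (intro binomial_mult_power_le) simp
  then have "real ((m - 1) choose (r - 1)) \<le> real ((t - k) choose (r - 1)) * (real (m - 1) / real (t - k)) ^ (r - 1)"
    using tk by (simp add: power_divide field_simps)
  also have "\<dots> \<le> real ((t - k) choose (r - 1)) * (1 / (4 * real r))"
    using y by (intro mult_left_mono) auto
  finally have D: "real ((m - 1) choose (r - 1)) \<le> real ((t - k) choose (r - 1)) * (1 / (4 * real r))" .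
  have "real r * real s \<le> real r * real (m choose r)" using s by (intro mult_left_mono) auto
  also have "\<dots> = real m * real ((m - 1) choose (r - 1))"
    using times_binomial_minus1_eq[of r m] r by (simp flip: of_nat_mult)
  also have "\<dots> \<le> real (4 * r^2 * k) * (real ((t - k) choose (r - 1)) * (1 / (4 * real r)))"
    using of_nat_mono[OF m(1)] D by (intro mult_mono) simp_all
  also have "\<dots> = real r * real (k * ((t - k) choose (r - 1)))" using r by (simp add: power2_eq_square)
  finally show ?thesis using r by (simp del: of_nat_mult)
qed

lemma obtain_window_width:
  fixes r m :: nat
  assumes "1 \<le> r" "8 * r^2 \<le> m"
  obtains k where "2 \<le> k" "2 * r^2 * k \<le> m - r" "m \<le> 4 * r^2 * k"
proof
  define d where "d = 2 * r^2"
  define k where "k = (m - r) div d"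
  have "r \<le> r^2" by (simp add: power2_eq_square)
  then have rd: "r \<le> d" "2 * d \<le> m - r" using assms(2) by (simp_all add: d_def)
  then show k2: "2 \<le> k" using assms(1) by (simp add: k_def d_def less_eq_div_iff_mult_less_eq)
  show "2 * r^2 * k \<le> m - r" by (simp add: k_def flip: d_def)
  have "0 < d" using assms(1) by (simp add: d_def)
  then have "m - r < k * d + d"
    unfolding k_def using div_mult_mod_eq[of "m - r" d] mod_less_divisor[of d "m - r"] by linarith
  moreover have "2 * d \<le> k * d" using k2 by (rule mult_le_mono1)
  ultimately have "m \<le> 2 * (k * d)" using rd by arith
  then show "m \<le> 4 * r^2 * k" by (simp add: d_def mult_ac)
qed

lemma le_mult_binomial_of_beta_bound:
  fixes r s m t k :: nat
  assumes r: "2 \<le> r"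
    and s: "s \<le> m choose r" "(m - 1) choose r < s" "real s \<le> beta r * real (t choose r)"
    and m: "8 * r^2 \<le> m" "m \<le> t"
    and k: "0 < k" "2 * r^2 * k \<le> m - r" "m \<le> 4 * r^2 * k"
  shows "k \<le> t" "s \<le> k * ((t - k) choose (r - 1))"
proof -
  have "2 * r \<le> r * r" using r by (intro mult_right_mono) auto
  then have rr: "r \<le> r^2" "2 * r + 1 \<le> 2 * r^2" using r unfolding power2_eq_square by linarith+
  then have M: "4 * r^2 + r \<le> m - 1" using m(1) by linarith
  have x: "((real (m - 1) - real r) / real t) ^ (r - 1) < 1 / (12 * real r)"
    using r M m(2) s by (intro shifted_ratio_power_lt) auto
  also have "\<dots> \<le> 1 ^ (r - 1)" using r by simp
  finally have "(real (m - 1) - real r) / real t < 1" by (rule power_less_imp_less_base) simp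
  then have "m - r \<le> t" using M m(2) by (simp add: divide_less_eq split: if_splits)
  have tk: "(2 * r + 1) * k \<le> t"
    using mult_le_mono1[OF rr(2), of k] k(2) \<open>m - r \<le> t\<close> by simp
  then show "k \<le> t" by (rule le_trans[rotated]) simp
  have y: "(real (m - 1) / real (t - k)) ^ (r - 1) < 1 / (4 * real r)"
    by (rule window_ratio_power_lt[OF r M k(1) tk x])
  have "k < (2 * r + 1) * k" using r k(1) by simp
  then have "0 < t - k" using tk by linarith
  have "(real (m - 1) / real (t - k)) ^ (r - 1) < 1 ^ (r - 1)"
    using y by (rule less_le_trans) (use r in simp)
  then have "real (m - 1) / real (t - k) < 1" by (rule power_less_imp_less_base) simp
  then have "m - 1 < t - k" using \<open>0 < t - k\<close> by (simp add: divide_less_eq)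
  then show "s \<le> k * ((t - k) choose (r - 1))"
    using r s(1) k(3) y by (intro le_mult_binomial_of_ratio_bound) auto
qed

lemma obtain_binomial_threshold:
  fixes r s t n :: nat
  assumes "1 \<le> r" "0 < s" "s \<le> t choose r" "n choose r \<le> s"
  obtains m where "s \<le> m choose r" "(m - 1) choose r < s" "n \<le> m" "m \<le> t"
proof
  define m where "m = (LEAST m. s \<le> m choose r)"
  show sm: "s \<le> m choose r" unfolding m_def by (rule LeastI[of _ t]) (rule assms(3))
  show "m \<le> t" unfolding m_def by (rule Least_le) (rule assms(3))
  have "r \<le> m" using sm assms(2) by (cases "r \<le> m") (auto simp: binomial_eq_0)
  then have "0 < m" using assms(1) by simp
  then show "(m - 1) choose r < s"
    using not_less_Least[of "m - 1" "\<lambda>m. s \<le> m choose r"] by (simp add: m_def)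
  show "n \<le> m"
  proof (rule ccontr)
    assume "\<not> n \<le> m"
    obtain j where j: "r = Suc j" using assms(1) by (cases r) auto
    have "m choose r < Suc m choose r" using \<open>r \<le> m\<close> by (simp add: j)
    also have "\<dots> \<le> n choose r" using \<open>\<not> n \<le> m\<close> by (intro binomial_right_mono) simp
    finally show False using assms(4) sm by simp
  qed
qed

theorem proposition6p3:
  fixes r t s :: nat
  assumes "r \<ge> 2" and "t > 0" and "s > 0"
    and "(8 * r^2) choose r \<le> s"
    and "real s \<le> beta r * real (t choose r)"
  shows "real (P2 (colex_initial s r)) \<le> real (P2 (lex_initial s r t)) / 2"
proof -
  let ?C = "colex_initial s r" and ?L = "lex_initial s r t"
  have r1: "1 \<le> r" using assms(1) by simp
  have "real s \<le> real (t choose r)"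
    using assms(5) mult_right_mono[OF beta_le_one[OF assms(1)], of "real (t choose r)"] by simp
  then have st: "s \<le> t choose r" by simp
  then obtain m where sm: "s \<le> m choose r" and sM: "(m - 1) choose r < s"
    and m: "8 * r^2 \<le> m" "m \<le> t"
    using obtain_binomial_threshold[OF r1 assms(3) _ assms(4)] by blast
  obtain k where k: "2 \<le> k" "2 * r^2 * k \<le> m - r" "m \<le> 4 * r^2 * k"
    using obtain_window_width[OF r1 m(1)] by blast
  have kt: "k \<le> t" and window: "s \<le> k * ((t - k) choose (r - 1))"
    using le_mult_binomial_of_beta_bound[OF assms(1) sm sM assms(5) m] k by auto
  have "r^2 * k * (2 * P2 ?C) \<le> (m - r) * P2 ?C"
    using mult_le_mono1[OF k(2)] by (simp add: mult_ac)
  also have "\<dots> \<le> r^2 * s^2" by (rule P2_colex_initial_le[OF r1 sm sM])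
  also have "\<dots> \<le> r^2 * k * P2 ?L"
    using P2_lex_initial_ge[OF r1 kt st window] by (simp add: mult.assoc)
  finally have "2 * P2 ?C \<le> P2 ?L" using k(1) r1 by simp
  then show ?thesis by simp
qed

end
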